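(* Let $G$ be a finite simple graph on $[d]$. Then for every integer $k\ge0$, $H(R[G]/K_G,k)=\sum_{G'\in{\rm Ind}(G)}{\rm Kc}(G',k)$, and in particular ${\rm Kc}(G,k)=\sum_{m=0}^{d}(-1)^{d-m}\sum_{G'\in{\rm Ind}_m(G)}H(R[G']/K_{G'},k)$.
   Context: A $k$-coloring of a graph $H$ is a map $V(H)\to[k]$ giving adjacent vertices distinct colors (the graph with no vertices has exactly one $k$-coloring). Kempe switching: for colors $i<j$ and a connected component $C$ of $H[f^{-1}(i)\cup f^{-1}(j)]$, interchange $i$ and $j$ on $C$; Kempe equivalence is the equivalence relation generated by Kempe switchings, colorings differing by a permutation of colors being identified; ${\rm Kc}(H,k)$ is the number of Kempe equivalence classes of $k$-colorings of $H$. ${\rm Ind}(G)$ is the set of induced subgraphs $G[W]$, $W\subseteq[d]$ (so $|{\rm Ind}(G)|=2^d$), and ${\rm Ind}_m(G)$ those with $|W|=m$. For a graph $G'$ on a finite vertex set $V$: a stable set is a subset of $V$ with no edge (including $\emptyset$); $R[G']=\mathbb{K}[x_S : S \text{ stable in } G']$ over a field $\mathbb{K}$ with all variables of degree $1$; $J_{G'}$ is generated by all $x_{S_1}x_{S_2}-x_{S_3}x_{S_4}$ with $S_i$ stable, $S_1\cap S_2=S_3\cap S_4=\emptyset$, $S_1\cup S_2=S_3\cup S_4$; $M_{G'}=\langle x_Sx_T : S\cap T\neq\emptyset\rangle$; $K_{G'}=J_{G'}+M_{G'}$. For a graded ideal $I$ of a graded polynomial ring $R$, $H(R/I,k)=\dim_{\mathbb{K}}R_k/I_k$.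 *)

theory Defs
  imports Main HOL.Vector_Spaces "HOL-Library.FuncSet" "HOL-Library.Multiset" "HOL-Library.Function_Algebras"
begin

text \<open>Graphs: a vertex set V (a set of naturals) and an edge set E of 2-element subsets.
  The graph G on [d] is ({1..d}, E); the induced subgraph G[W] is (W, induced_edges E W).\<close>

definition simple_graph_on :: "nat set \<Rightarrow> nat set set \<Rightarrow> bool" where
  "simple_graph_on V E \<longleftrightarrow> (\<forall>e\<in>E. \<exists>u v. e = {u, v} \<and> u \<noteq> v \<and> u \<in> V \<and> v \<in> V)"

definition induced_edges :: "nat set set \<Rightarrow> nat set \<Rightarrow> nat set set" where
  "induced_edges E W = {e \<in> E. e \<subseteq> W}"

definition adj :: "nat set set \<Rightarrow> nat \<Rightarrow> nat \<Rightarrow> bool" where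
  "adj E u v \<longleftrightarrow> u \<noteq> v \<and> {u, v} \<in> E"

definition colorings :: "nat set \<Rightarrow> nat set set \<Rightarrow> nat \<Rightarrow> (nat \<Rightarrow> nat) set" where
  "colorings V E k = {f \<in> V \<rightarrow>\<^sub>E {1..k}. \<forall>u\<in>V. \<forall>v\<in>V. adj E u v \<longrightarrow> f u \<noteq> f v}"

definition kempe_component :: "nat set \<Rightarrow> nat set set \<Rightarrow> (nat \<Rightarrow> nat) \<Rightarrow> nat \<Rightarrow> nat \<Rightarrow> nat set \<Rightarrow> bool" where
  "kempe_component V E f i j C \<longleftrightarrow>
     (\<exists>v\<in>V. f v \<in> {i, j} \<and>
        C = {w \<in> V. f w \<in> {i, j} \<and>
               (v, w) \<in> {(x, y). x \<in> V \<and> y \<in> V \<and> f x \<in> {i, j} \<and> f y \<in> {i, j} \<and> adj E x y}\<^sup>*})"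

definition kempe_switch :: "(nat \<Rightarrow> nat) \<Rightarrow> nat \<Rightarrow> nat \<Rightarrow> nat set \<Rightarrow> (nat \<Rightarrow> nat)" where
  "kempe_switch f i j C = (\<lambda>x. if x \<in> C then (if f x = i then j else if f x = j then i else f x) else f x)"

definition kempe_step :: "nat set \<Rightarrow> nat set set \<Rightarrow> nat \<Rightarrow> ((nat \<Rightarrow> nat) \<times> (nat \<Rightarrow> nat)) set" where
  "kempe_step V E k = {(f, g). f \<in> colorings V E k \<and>
     ((\<exists>i j C. 1 \<le> i \<and> i < j \<and> j \<le> k \<and> kempe_component V E f i j C \<and> g = kempe_switch f i j C)
      \<or> (\<exists>\<sigma>. bij_betw \<sigma> {1..k} {1..k} \<and> g = restrict (\<sigma> \<circ> f) V))}"

definition kempe_equiv :: "nat set \<Rightarrow> nat set set \<Rightarrow> nat \<Rightarrow> ((nat \<Rightarrow> nat) \<times> (nat \<Rightarrow> nat)) set" where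
  "kempe_equiv V E k = ((kempe_step V E k \<union> (kempe_step V E k)\<inverse>)\<^sup>*) \<inter> (colorings V E k \<times> colorings V E k)"

definition Kc :: "nat set \<Rightarrow> nat set set \<Rightarrow> nat \<Rightarrow> nat" where
  "Kc V E k = card (colorings V E k // kempe_equiv V E k)"

definition stable :: "nat set \<Rightarrow> nat set set \<Rightarrow> nat set \<Rightarrow> bool" where
  "stable V E S \<longleftrightarrow> S \<subseteq> V \<and> (\<forall>u\<in>S. \<forall>v\<in>S. \<not> adj E u v)"

definition stables :: "nat set \<Rightarrow> nat set set \<Rightarrow> nat set set" where
  "stables V E = {S. stable V E S}"

text \<open>Polynomials in the variables x_S (S stable) are represented by their coefficient
  functions on monomials, monomials being multisets of variables (= stable sets).\<close>

definition fscale :: "'a::field \<Rightarrow> ('m \<Rightarrow> 'a) \<Rightarrow> ('m \<Rightarrow> 'a)" where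
  "fscale c p = (\<lambda>x. c * p x)"

definition monomials_deg :: "'v set \<Rightarrow> nat \<Rightarrow> 'v multiset set" where
  "monomials_deg X k = {M. set_mset M \<subseteq> X \<and> size M = k}"

definition mono_ind :: "'v multiset \<Rightarrow> 'v multiset \<Rightarrow> 'a::field" where
  "mono_ind M = (\<lambda>N. if N = M then 1 else 0)"

definition Rdeg :: "'v set \<Rightarrow> nat \<Rightarrow> ('v multiset \<Rightarrow> 'a::field) set" where
  "Rdeg X k = {p. \<forall>N. N \<notin> monomials_deg X k \<longrightarrow> p N = 0}"

text \<open>Spanning set of (K_G)_k: monomials of degree k-2 times the quadratic generators
  of J_G (binomials) and of M_G (monomials).\<close>
definition Kgens :: "nat set \<Rightarrow> nat set set \<Rightarrow> nat \<Rightarrow> (nat set multiset \<Rightarrow> 'a::field) set" where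
  "Kgens V E k =
     {mono_ind (m + {#S1, S2#}) - mono_ind (m + {#S3, S4#}) | m S1 S2 S3 S4.
        m \<in> monomials_deg (stables V E) (k - 2) \<and> 2 \<le> k \<and>
        S1 \<in> stables V E \<and> S2 \<in> stables V E \<and> S3 \<in> stables V E \<and> S4 \<in> stables V E \<and>
        S1 \<inter> S2 = {} \<and> S3 \<inter> S4 = {} \<and> S1 \<union> S2 = S3 \<union> S4}
   \<union> {mono_ind (m + {#S, T#}) | m S T.
        m \<in> monomials_deg (stables V E) (k - 2) \<and> 2 \<le> k \<and>
        S \<in> stables V E \<and> T \<in> stables V E \<and> S \<inter> T \<noteq> {}}"

definition hilbK :: "'a::field itself \<Rightarrow> nat set \<Rightarrow> nat set set \<Rightarrow> nat \<Rightarrow> nat" where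
  "hilbK _ V E k =
     vector_space.dim (fscale :: 'a \<Rightarrow> _) (Rdeg (stables V E) k :: (nat set multiset \<Rightarrow> 'a) set)
     - vector_space.dim (fscale :: 'a \<Rightarrow> _) (Kgens V E k :: (nat set multiset \<Rightarrow> 'a) set)"

lemma vector_space_fscale: "vector_space (fscale :: 'a::field \<Rightarrow> ('m \<Rightarrow> 'a) \<Rightarrow> _)"
  by unfold_locales (auto simp: fscale_def fun_eq_iff algebra_simps)

end

theory Submission
  imports Defs "HOL-Combinatorics.Permutations"
begin

(* A monomial x_{S_1} ... x_{S_k} lies outside M_G exactly when the stable sets S_i are pairwise
   disjoint, i.e. when it is the monomial of the k-colouring of G[S_1 \<union> ... \<union> S_k] with colour
   classes S_1, ..., S_k, read up to a permutation of the colours. Modulo M_G, the binomials of J_G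
   identify two such monomials iff they are joined by moves replacing two colour classes by two
   others with the same union, and such recolourings of two classes are exactly what sequences of
   Kempe switches achieve. So the standard monomials of (R[G]/K_G)_k correspond to the Kempe classes
   of k-colourings of all induced subgraphs, and the alternating formula is Moebius inversion over
   the subsets of [d]. *)

section \<open>Dimension counting for coefficient functions\<close>

lemma sum_fun_apply: "(sum f A) x = (\<Sum>a\<in>A. f a x)"
  by (induction A rule: infinite_finite_induct) auto

lemma independent_if_pivots:
  fixes v :: "'i \<Rightarrow> 'm \<Rightarrow> 'a::field"
  assumes fin: "finite I"
    and pivot: "\<And>i. i \<in> I \<Longrightarrow> v i (piv i) \<noteq> 0"
    and off_pivot: "\<And>i j. i \<in> I \<Longrightarrow> j \<in> I \<Longrightarrow> j \<noteq> i \<Longrightarrow> v j (piv i) = 0"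
  shows "\<not> module.dependent fscale (v ` I)" and "inj_on v I"
proof -
  interpret vs: vector_space "fscale :: 'a \<Rightarrow> ('m \<Rightarrow> 'a) \<Rightarrow> _" by (rule vector_space_fscale)
  show inj: "inj_on v I"
    by (rule inj_onI) (metis pivot off_pivot)
  show "\<not> vs.dependent (v ` I)"
  proof
    assume "vs.dependent (v ` I)"
    then obtain u where u: "\<exists>w\<in>v ` I. u w \<noteq> 0" "(\<Sum>w\<in>v ` I. fscale (u w) w) = 0"
      using vs.dependent_finite fin by blast
    then obtain i0 where i0: "i0 \<in> I" "u (v i0) \<noteq> 0" by blast
    have "0 = (\<Sum>w\<in>v ` I. fscale (u w) w) (piv i0)" using u by simp
    also have "\<dots> = (\<Sum>i\<in>I. u (v i) * v i (piv i0))"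
      by (simp add: sum_fun_apply fscale_def sum.reindex[OF inj])
    also have "\<dots> = u (v i0) * v i0 (piv i0)"
      using i0 off_pivot fin by (subst sum.remove[of _ i0]) (auto intro!: sum.neutral)
    finally show False using i0 pivot by simp
  qed
qed

definition supported :: "'m set \<Rightarrow> ('m \<Rightarrow> 'a::field) set" where
  "supported M = {p. \<forall>N. N \<notin> M \<longrightarrow> p N = 0}"

lemma Rdeg_eq_supported: "Rdeg X k = supported (monomials_deg X k)"
  by (simp add: Rdeg_def supported_def)

lemma dim_supported:
  assumes fin: "finite Mon"
  shows "vector_space.dim fscale (supported Mon :: ('v multiset \<Rightarrow> 'a::field) set) = card Mon"
proof -
  interpret vs: vector_space "fscale :: 'a \<Rightarrow> ('v multiset \<Rightarrow> 'a) \<Rightarrow> _" by (rule vector_space_fscale)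
  let ?B = "mono_ind ` Mon :: ('v multiset \<Rightarrow> 'a) set"
  have indep: "\<not> vs.dependent ?B" and inj: "inj_on (mono_ind :: _ \<Rightarrow> _ \<Rightarrow> 'a) Mon"
    by (rule independent_if_pivots[where piv = id]; simp add: fin mono_ind_def)+
  show ?thesis
  proof (rule vs.dim_unique[OF _ _ indep])
    show "?B \<subseteq> supported Mon"
      by (auto simp: mono_ind_def supported_def)
    show "supported Mon \<subseteq> vs.span ?B"
    proof
      fix p :: "'v multiset \<Rightarrow> 'a" assume "p \<in> supported Mon"
      then have "p = (\<Sum>N\<in>Mon. fscale (p N) (mono_ind N))"
        using fin by (auto simp: fun_eq_iff sum_fun_apply fscale_def mono_ind_def supported_def
            if_distrib[where f="\<lambda>x. _ * x"] sum.delta cong: if_cong)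
      also have "\<dots> \<in> vs.span ?B"
        by (intro vs.span_sum vs.span_scale vs.span_base) auto
      finally show "p \<in> vs.span ?B" .
    qed
    show "card ?B = card Mon" using inj by (rule card_image)
  qed
qed

(* The fixed points of r index a basis of the quotient: a non-fixed N occurs only in x_N - x_{r N},
   because r N is itself fixed. *)
lemma dim_supported_minus_dim_eq_card_retract:
  fixes Gen :: "('v multiset \<Rightarrow> 'a::field) set"
  assumes fin: "finite Mon" and bad: "Bad \<subseteq> Mon"
    and retract: "\<And>N. N \<in> Mon - Bad \<Longrightarrow> r N \<in> Mon - Bad \<and> r (r N) = r N"
    and span_Gen: "module.span fscale Gen
      = module.span fscale (mono_ind ` Bad \<union> (\<lambda>N. mono_ind N - mono_ind (r N)) ` (Mon - Bad))"
  shows "vector_space.dim fscale (supported Mon :: ('v multiset \<Rightarrow> 'a) set) - vector_space.dim fscale Gen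
     = card (r ` (Mon - Bad))"
proof -
  interpret vs: vector_space "fscale :: 'a \<Rightarrow> ('v multiset \<Rightarrow> 'a) \<Rightarrow> _" by (rule vector_space_fscale)
  define D where "D = {N \<in> Mon - Bad. r N \<noteq> N}"
  define v where
    "v N = (if N \<in> Bad then mono_ind N else mono_ind N - mono_ind (r N) :: 'v multiset \<Rightarrow> 'a)" for N
  have finB: "finite Bad" and finD: "finite D" using fin bad finite_subset by (auto simp: D_def)
  have pivot: "v j N = 0" if "N \<in> Bad \<union> D" "j \<in> Bad \<union> D" "j \<noteq> N" for N j
  proof (cases "j \<in> Bad")
    case False
    then have "r j \<noteq> N" using that retract by (auto simp: D_def)
    then show ?thesis using False that by (simp add: v_def mono_ind_def)
  qed (use that in \<open>simp add: v_def mono_ind_def\<close>)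
  have indep: "\<not> vs.dependent (v ` (Bad \<union> D))" and inj: "inj_on v (Bad \<union> D)"
    by (rule independent_if_pivots[where piv = id],
        use finB finD pivot in \<open>auto simp: v_def mono_ind_def D_def\<close>)+
  have v_image: "v ` (Bad \<union> D) = mono_ind ` Bad \<union> (\<lambda>N. mono_ind N - mono_ind (r N)) ` D"
    by (auto simp: v_def D_def image_Un intro!: image_cong)
  have "(\<lambda>N. mono_ind N - mono_ind (r N)) ` (Mon - Bad) \<subseteq> insert 0 ((\<lambda>N. mono_ind N - mono_ind (r N)) ` D)"
    by (auto simp: D_def)
  then have gens_sub:
    "mono_ind ` Bad \<union> (\<lambda>N. mono_ind N - mono_ind (r N)) ` (Mon - Bad) \<subseteq> insert 0 (v ` (Bad \<union> D))"
    unfolding v_image by blast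
  then have "vs.span Gen \<subseteq> vs.span (v ` (Bad \<union> D))"
    unfolding span_Gen using vs.span_mono[OF gens_sub] by simp
  moreover have "vs.span (v ` (Bad \<union> D)) \<subseteq> vs.span Gen"
    unfolding span_Gen v_image by (intro vs.span_mono) (auto simp: D_def)
  ultimately have "vs.dim Gen = card (Bad \<union> D)"
    using vs.span_eq_dim vs.dim_eq_card_independent[OF indep] card_image[OF inj] by (metis antisym)
  moreover have "r ` (Mon - Bad) = {N \<in> Mon - Bad. r N = N}"
    using retract by (auto simp: image_def) (metis DiffI)
  moreover have "card (Mon - Bad) = card D + card {N \<in> Mon - Bad. r N = N}"
    unfolding D_def using fin by (subst card_Un_disjoint[symmetric]) (auto intro: arg_cong[where f = card])
  moreover have "card Mon = card Bad + card (Mon - Bad)"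
    using fin bad finB by (metis card_Diff_subset card_mono le_add_diff_inverse)
  moreover have "card (Bad \<union> D) = card Bad + card D"
    using finB finD by (subst card_Un_disjoint) (auto simp: D_def)
  ultimately show ?thesis
    using dim_supported[OF fin, where 'a = 'a] by simp
qed

section \<open>Binomial moves between monomials in stable sets\<close>

definition overlapping :: "'v set multiset \<Rightarrow> bool" where
  "overlapping N \<longleftrightarrow> (\<exists>m S T. N = m + {#S, T#} \<and> S \<inter> T \<noteq> {})"

definition cover_count :: "'v set multiset \<Rightarrow> 'v \<Rightarrow> nat" where
  "cover_count N x = size (filter_mset (\<lambda>S. x \<in> S) N)"

lemma overlapping_iff_cover_count: "overlapping N \<longleftrightarrow> (\<exists>x. 2 \<le> cover_count N x)"
proof
  assume "overlapping N"
  then obtain m S T x where "N = m + {#S, T#}" "x \<in> S" "x \<in> T"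
    unfolding overlapping_def by blast
  then show "\<exists>x. 2 \<le> cover_count N x" by (auto simp: cover_count_def)
next
  assume "\<exists>x. 2 \<le> cover_count N x"
  then obtain x where x: "2 \<le> size (filter_mset (\<lambda>S. x \<in> S) N)" by (auto simp: cover_count_def)
  define P where "P = filter_mset (\<lambda>S. x \<in> S) N"
  obtain S where S: "S \<in># P"
    using x by (metis P_def multiset_nonemptyE not_numeral_le_zero size_empty)
  have "size (P - {#S#}) \<ge> 1" using x S P_def by (simp add: size_Diff_submset)
  then obtain T where T: "T \<in># P - {#S#}"
    by (metis multiset_nonemptyE not_one_le_zero size_empty)
  have "{#S, T#} \<subseteq># P"
    using S T by (metis add_mset_add_single insert_DiffM insert_subset_eq_iff
        mset_subset_eq_add_mset_cancel single_subset_iff subset_mset.zero_le)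
  then have "{#S, T#} \<subseteq># N" unfolding P_def by (meson multiset_filter_subset subset_mset.order_trans)
  moreover have "x \<in> S" "x \<in> T" using S T P_def by (auto dest: in_diffD)
  ultimately show "overlapping N"
    unfolding overlapping_def by (metis subset_mset.diff_add disjoint_iff)
qed

(* (A, B) is a move iff x_A - x_B is one of the binomials spanning (J_G)_k. *)
definition binomial_move :: "'v set set \<Rightarrow> nat \<Rightarrow> ('v set multiset \<times> 'v set multiset) set" where
  "binomial_move X k = {(m + {#S1, S2#}, m + {#S3, S4#}) | m S1 S2 S3 S4.
     m \<in> monomials_deg X (k - 2) \<and> 2 \<le> k \<and> S1 \<in> X \<and> S2 \<in> X \<and> S3 \<in> X \<and> S4 \<in> X \<and>
     S1 \<inter> S2 = {} \<and> S3 \<inter> S4 = {} \<and> S1 \<union> S2 = S3 \<union> S4}"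

lemma cover_count_add_mset2:
  "S1 \<inter> S2 = {} \<Longrightarrow>
    cover_count (add_mset S1 (add_mset S2 m)) x = cover_count m x + (if x \<in> S1 \<union> S2 then 1 else 0)"
  by (auto simp: cover_count_def)

lemma binomial_move_sym: "(A, B) \<in> binomial_move X k \<Longrightarrow> (B, A) \<in> binomial_move X k"
  unfolding binomial_move_def by blast

lemma binomial_move_monomials:
  "(A, B) \<in> binomial_move X k \<Longrightarrow> A \<in> monomials_deg X k \<and> B \<in> monomials_deg X k"
  unfolding binomial_move_def monomials_deg_def by auto

lemma binomial_move_invariants:
  assumes "(A, B) \<in> binomial_move X k"
  shows "cover_count A = cover_count B" and "\<Union>(set_mset A) = \<Union>(set_mset B)"
  using assms unfolding binomial_move_def by (auto simp: fun_eq_iff cover_count_add_mset2)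

lemma binomial_moves_sym: "(A, B) \<in> (binomial_move X k)\<^sup>* \<Longrightarrow> (B, A) \<in> (binomial_move X k)\<^sup>*"
  by (induction rule: rtrancl_induct) (auto intro: converse_rtrancl_into_rtrancl binomial_move_sym)

lemma binomial_moves_invariants:
  assumes "(A, B) \<in> (binomial_move X k)\<^sup>*"
  shows "overlapping A \<longleftrightarrow> overlapping B" and "\<Union>(set_mset A) = \<Union>(set_mset B)"
proof -
  have "cover_count A = cover_count B \<and> \<Union>(set_mset A) = \<Union>(set_mset B)"
    using assms
  proof (induction rule: rtrancl_induct)
    case (step y z)
    then show ?case using binomial_move_invariants[OF step(2)] by simp
  qed simp
  then show "overlapping A \<longleftrightarrow> overlapping B" and "\<Union>(set_mset A) = \<Union>(set_mset B)"
    by (simp_all add: overlapping_iff_cover_count)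
qed

lemma binomial_moves_monomials:
  "(A, B) \<in> (binomial_move X k)\<^sup>* \<Longrightarrow> A \<in> monomials_deg X k \<Longrightarrow> B \<in> monomials_deg X k"
  by (induction rule: rtrancl_induct) (auto dest: binomial_move_monomials)

definition move_rep :: "'v set set \<Rightarrow> nat \<Rightarrow> 'v set multiset \<Rightarrow> 'v set multiset" where
  "move_rep X k N = (SOME N'. (N, N') \<in> (binomial_move X k)\<^sup>*)"

lemma moves_to_move_rep: "(N, move_rep X k N) \<in> (binomial_move X k)\<^sup>*"
  unfolding move_rep_def by (rule someI[where x = N]) simp

lemma move_rep_eq_iff: "move_rep X k A = move_rep X k B \<longleftrightarrow> (A, B) \<in> (binomial_move X k)\<^sup>*"
proof
  assume "move_rep X k A = move_rep X k B"
  then show "(A, B) \<in> (binomial_move X k)\<^sup>*"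
    by (metis moves_to_move_rep binomial_moves_sym rtrancl_trans)
next
  assume "(A, B) \<in> (binomial_move X k)\<^sup>*"
  then have "(A, N') \<in> (binomial_move X k)\<^sup>* \<longleftrightarrow> (B, N') \<in> (binomial_move X k)\<^sup>*" for N'
    by (meson binomial_moves_sym rtrancl_trans)
  then show "move_rep X k A = move_rep X k B" unfolding move_rep_def by simp
qed

lemma overlapping_monomials_eq:
  "{N \<in> monomials_deg X k. overlapping N} = {m + {#S, T#} | m S T.
     m \<in> monomials_deg X (k - 2) \<and> 2 \<le> k \<and> S \<in> X \<and> T \<in> X \<and> S \<inter> T \<noteq> {}}"
proof (intro subset_antisym subsetI)
  fix N assume "N \<in> {N \<in> monomials_deg X k. overlapping N}"
  then obtain m S T where "N = m + {#S, T#}" "S \<inter> T \<noteq> {}" "set_mset N \<subseteq> X" "size N = k"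
    unfolding overlapping_def monomials_deg_def by blast
  then show "N \<in> {m + {#S, T#} | m S T.
     m \<in> monomials_deg X (k - 2) \<and> 2 \<le> k \<and> S \<in> X \<and> T \<in> X \<and> S \<inter> T \<noteq> {}}"
    by (auto simp: monomials_deg_def) blast
qed (auto simp: overlapping_def monomials_deg_def)

lemma Kgens_eq:
  "(Kgens V E k :: (nat set multiset \<Rightarrow> 'a::field) set)
     = (\<lambda>(A, B). mono_ind A - mono_ind B) ` binomial_move (stables V E) k
     \<union> mono_ind ` {N \<in> monomials_deg (stables V E) k. overlapping N}"
proof -
  have binomials: "({mono_ind (m + {#S1, S2#}) - mono_ind (m + {#S3, S4#}) | m S1 S2 S3 S4. P m S1 S2 S3 S4}
    :: (nat set multiset \<Rightarrow> 'a) set)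
    = (\<lambda>(A, B). mono_ind A - mono_ind B) `
        {(m + {#S1, S2#}, m + {#S3, S4#}) | m S1 S2 S3 S4. P m S1 S2 S3 S4}"
    for P
  proof (intro set_eqI iffI)
    fix p assume "p \<in> (\<lambda>(A, B). mono_ind A - mono_ind B) `
      {(m + {#S1, S2#}, m + {#S3, S4#}) | m S1 S2 S3 S4. P m S1 S2 S3 S4}"
    then obtain m S1 S2 S3 S4
      where "P m S1 S2 S3 S4" "p = mono_ind (m + {#S1, S2#}) - mono_ind (m + {#S3, S4#})"
      by auto
    then show "p \<in> {mono_ind (m + {#S1, S2#}) - mono_ind (m + {#S3, S4#}) | m S1 S2 S3 S4. P m S1 S2 S3 S4}"
      by blast
  qed fast
  have monomials: "({mono_ind (m + {#S, T#}) | m S T. Q m S T} :: (nat set multiset \<Rightarrow> 'a) set)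
    = mono_ind ` {m + {#S, T#} | m S T. Q m S T}" for Q by blast
  show ?thesis
    unfolding Kgens_def binomial_move_def overlapping_monomials_eq by (simp only: binomials monomials)
qed

lemma diff_in_span_if_binomial_moves:
  assumes "(N, N') \<in> (binomial_move X k)\<^sup>*"
  shows "mono_ind N - mono_ind N' \<in> module.span fscale
    ((\<lambda>(A, B). mono_ind A - mono_ind B) ` binomial_move X k :: ('v set multiset \<Rightarrow> 'a::field) set)"
proof -
  interpret vs: vector_space "fscale :: 'a \<Rightarrow> ('v set multiset \<Rightarrow> 'a) \<Rightarrow> _" by (rule vector_space_fscale)
  from assms show ?thesis
  proof (induction rule: rtrancl_induct)
    case base
    show ?case using vs.span_zero by (simp only: diff_self)
  next
    case (step y z)
    have "mono_ind y - mono_ind z \<in> vs.span ((\<lambda>(A, B). mono_ind A - mono_ind B) ` binomial_move X k)"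
      using step(2) by (intro vs.span_base) force
    from vs.span_add[OF step.IH this] show ?case by (simp only: diff_add_cancel add_diff_eq)
  qed
qed

lemma span_binomials_and_overlapping:
  fixes X :: "'v set set" and k :: nat
  defines "Mon \<equiv> monomials_deg X k" and "Bad \<equiv> {N \<in> monomials_deg X k. overlapping N}"
  shows "module.span fscale
      ((\<lambda>(A, B). mono_ind A - mono_ind B) ` binomial_move X k \<union> mono_ind ` Bad
        :: ('v set multiset \<Rightarrow> 'a::field) set)
    = module.span fscale (mono_ind ` Bad \<union> (\<lambda>N. mono_ind N - mono_ind (move_rep X k N)) ` (Mon - Bad))"
proof -
  interpret vs: vector_space "fscale :: 'a \<Rightarrow> ('v set multiset \<Rightarrow> 'a) \<Rightarrow> _" by (rule vector_space_fscale)
  let ?Bin = "(\<lambda>(A, B). mono_ind A - mono_ind B) ` binomial_move X k :: ('v set multiset \<Rightarrow> 'a) set"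
  let ?Red = "mono_ind ` Bad \<union> (\<lambda>N. mono_ind N - mono_ind (move_rep X k N)) ` (Mon - Bad)
    :: ('v set multiset \<Rightarrow> 'a) set"
  have "mono_ind A - mono_ind B \<in> vs.span ?Red" if move: "(A, B) \<in> binomial_move X k" for A B
  proof -
    have AB: "A \<in> Mon" "B \<in> Mon" and "(A, B) \<in> (binomial_move X k)\<^sup>*"
      using binomial_move_monomials[OF move] move by (auto simp: Mon_def)
    then have same: "overlapping A \<longleftrightarrow> overlapping B" "move_rep X k A = move_rep X k B"
      using binomial_moves_invariants move_rep_eq_iff by blast+
    show ?thesis
    proof (cases "overlapping A")
      case True
      then have "mono_ind A \<in> vs.span ?Red" "mono_ind B \<in> vs.span ?Red"
        using AB same by (auto simp: Bad_def Mon_def intro: vs.span_base)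
      then show ?thesis by (rule vs.span_diff)
    next
      case False
      then have "mono_ind A - mono_ind (move_rep X k A) \<in> ?Red"
          "mono_ind B - mono_ind (move_rep X k B) \<in> ?Red"
        using AB same(1) by (auto simp: Bad_def Mon_def)
      from vs.span_diff[OF this[THEN vs.span_base]] show ?thesis
        by (simp add: same(2) algebra_simps)
    qed
  qed
  then have "?Bin \<union> mono_ind ` Bad \<subseteq> vs.span ?Red"
    by (auto intro: vs.span_base)
  moreover have "?Red \<subseteq> vs.span (?Bin \<union> mono_ind ` Bad)"
  proof -
    have "mono_ind N - mono_ind (move_rep X k N) \<in> vs.span (?Bin \<union> mono_ind ` Bad)" for N
      using diff_in_span_if_binomial_moves[OF moves_to_move_rep] vs.span_mono[of ?Bin] by blast
    then show ?thesis by (auto intro: vs.span_base)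
  qed
  ultimately show ?thesis by (simp only: vs.span_eq)
qed

lemma finite_stables: "finite V \<Longrightarrow> finite (stables V E)"
  by (rule finite_subset[of _ "Pow V"]) (auto simp: stables_def stable_def)

lemma finite_monomials_deg: "finite X \<Longrightarrow> finite (monomials_deg X k)"
  using finite_multisets_of_size[of X k] by (simp add: monomials_deg_def multisets_of_size_def)

lemma hilbK_eq_card_move_classes:
  assumes "finite V"
  shows "hilbK TYPE('a::field) V E k
    = card (move_rep (stables V E) k ` {N \<in> monomials_deg (stables V E) k. \<not> overlapping N})"
proof -
  let ?X = "stables V E" and ?r = "move_rep (stables V E) k"
  let ?Mon = "monomials_deg ?X k" and ?Bad = "{N \<in> monomials_deg ?X k. overlapping N}"
  have retract: "?r N \<in> ?Mon - ?Bad \<and> ?r (?r N) = ?r N" if "N \<in> ?Mon - ?Bad" for N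
  proof -
    have moves: "(N, ?r N) \<in> (binomial_move ?X k)\<^sup>*" by (rule moves_to_move_rep)
    then have "?r N \<in> ?Mon" "\<not> overlapping (?r N)"
      using that binomial_moves_monomials binomial_moves_invariants(1) by blast+
    moreover have "?r N = ?r (?r N)" using moves move_rep_eq_iff by blast
    ultimately show ?thesis by simp
  qed
  have "vector_space.dim fscale (supported ?Mon :: (_ \<Rightarrow> 'a) set)
      - vector_space.dim fscale (Kgens V E k :: (_ \<Rightarrow> 'a) set)
      = card (?r ` (?Mon - ?Bad))"
    by (rule dim_supported_minus_dim_eq_card_retract
        [OF finite_monomials_deg[OF finite_stables[OF assms]] _ retract])
      (auto simp only: Kgens_eq span_binomials_and_overlapping)
  moreover have "?Mon - ?Bad = {N \<in> ?Mon. \<not> overlapping N}" by auto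
  ultimately show ?thesis by (simp add: hilbK_def Rdeg_eq_supported)
qed

section \<open>Colourings as monomials\<close>

lemma image_mset_mset_set_remove:
  assumes "finite K" "i \<in> K"
  shows "image_mset F (mset_set K) = add_mset (F i) (image_mset F (mset_set (K - {i})))"
  using mset_set.remove[OF assms] by simp

lemma image_mset_mset_set_remove2:
  assumes "finite K" "i \<in> K" "j \<in> K" "i \<noteq> j"
  shows "image_mset F (mset_set K) = image_mset F (mset_set (K - {i, j})) + {#F i, F j#}"
proof -
  have "image_mset F (mset_set K)
      = add_mset (F i) (add_mset (F j) (image_mset F (mset_set (K - {i} - {j}))))"
    using assms
    by (simp add: image_mset_mset_set_remove[of K i] image_mset_mset_set_remove[of "K - {i}" j])
  moreover have "K - {i} - {j} = K - {i, j}" by auto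
  ultimately show ?thesis by simp
qed

lemma image_mset_mset_set_eq_add2E:
  assumes "finite K" "image_mset F (mset_set K) = m + {#S, T#}"
  obtains i j where "i \<in> K" "j \<in> K" "i \<noteq> j" "F i = S" "F j = T"
    "m = image_mset F (mset_set (K - {i, j}))"
proof -
  have "S \<in># image_mset F (mset_set K)" using assms(2) by simp
  then obtain i where i: "i \<in> K" "F i = S" using assms(1) by auto
  have "image_mset F (mset_set (K - {i})) = add_mset T m"
    using image_mset_mset_set_remove[OF assms(1) i(1), of F] assms(2) i(2) by simp
  then have "T \<in># image_mset F (mset_set (K - {i}))" by simp
  then obtain j where j: "j \<in> K - {i}" "F j = T" using assms(1) by auto
  have "image_mset F (mset_set K) = image_mset F (mset_set (K - {i, j})) + {#S, T#}"
    using image_mset_mset_set_remove2[OF assms(1) i(1), of j F] i j by auto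
  then have "m = image_mset F (mset_set (K - {i, j}))" using assms(2) by simp
  with i j that show thesis by blast
qed

definition color_class :: "nat set \<Rightarrow> (nat \<Rightarrow> nat) \<Rightarrow> nat \<Rightarrow> nat set" where
  "color_class W f i = {x \<in> W. f x = i}"

(* x_{f^-1(1)} ... x_{f^-1(k)}; every unused colour contributes the variable x_{} of the empty stable set. *)
definition coloring_monomial :: "nat set \<Rightarrow> nat \<Rightarrow> (nat \<Rightarrow> nat) \<Rightarrow> nat set multiset" where
  "coloring_monomial W k f = image_mset (color_class W f) (mset_set {1..k})"

lemma adj_sym: "adj E u v = adj E v u"
  by (auto simp: adj_def insert_commute)

lemma color_class_stable:
  assumes "f \<in> colorings W E k" "W \<subseteq> V"
  shows "color_class W f i \<in> stables V E"
  using assms unfolding color_class_def stables_def stable_def colorings_def by (auto; metis)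

lemma coloring_monomial_in_monomials_deg:
  "f \<in> colorings W E k \<Longrightarrow> W \<subseteq> V \<Longrightarrow> coloring_monomial W k f \<in> monomials_deg (stables V E) k"
  using color_class_stable by (auto simp: coloring_monomial_def monomials_deg_def)

lemma not_overlapping_coloring_monomial: "\<not> overlapping (coloring_monomial W k f)"
proof
  assume "overlapping (coloring_monomial W k f)"
  then obtain m S T where "image_mset (color_class W f) (mset_set {1..k}) = m + {#S, T#}" "S \<inter> T \<noteq> {}"
    unfolding overlapping_def coloring_monomial_def by blast
  moreover obtain i j where "i \<noteq> j" "color_class W f i = S" "color_class W f j = T"
    using calculation(1) by (rule image_mset_mset_set_eq_add2E[OF finite_atLeastAtMost])
  ultimately show False by (auto simp: color_class_def)
qed

lemma Union_coloring_monomial: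
  assumes "f \<in> colorings W E k"
  shows "\<Union>(set_mset (coloring_monomial W k f)) = W"
proof
  show "\<Union>(set_mset (coloring_monomial W k f)) \<subseteq> W"
    by (auto simp: coloring_monomial_def color_class_def)
  show "W \<subseteq> \<Union>(set_mset (coloring_monomial W k f))"
  proof
    fix x assume x: "x \<in> W"
    then have "f x \<in> {1..k}" using assms by (auto simp: colorings_def PiE_iff)
    moreover have "x \<in> color_class W f (f x)" using x by (simp add: color_class_def)
    ultimately show "x \<in> \<Union>(set_mset (coloring_monomial W k f))"
      by (auto simp: coloring_monomial_def)
  qed
qed

lemma coloring_monomial_surj:
  assumes N: "N \<in> monomials_deg (stables V E) k" "\<not> overlapping N" "\<Union>(set_mset N) = W"
  obtains f where "f \<in> colorings W E k" "coloring_monomial W k f = N"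
proof -
  define K where "K = {1..k}"
  obtain xs where xs: "mset xs = N" using ex_mset by blast
  have len: "length xs = k" using xs N(1) by (auto simp: monomials_deg_def)
  define L where "L i = xs ! (i - 1)" for i
  have "map L [1..<Suc k] = xs"
    by (rule nth_equalityI) (simp_all add: L_def len del: upt_Suc)
  then have NL: "N = image_mset L (mset_set K)"
    using xs unfolding K_def by (metis mset_map mset_upt atLeastLessThanSuc_atLeastAtMost)
  have stable: "L i \<in> stables V E" if "i \<in> K" for i
    using N(1) NL that by (auto simp: monomials_deg_def K_def)
  have disjoint: "L i \<inter> L j = {}" if "i \<in> K" "j \<in> K" "i \<noteq> j" for i j
  proof (rule ccontr)
    assume "L i \<inter> L j \<noteq> {}"
    moreover have "N = image_mset L (mset_set (K - {i, j})) + {#L i, L j#}"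
      using NL image_mset_mset_set_remove2[of K i j L] that by (simp add: K_def)
    ultimately have "overlapping N" unfolding overlapping_def by blast
    with N(2) show False ..
  qed
  have cover: "\<Union>(L ` K) = W" using N(3) NL by (simp add: K_def)
  then have unique: "\<exists>!i. i \<in> K \<and> x \<in> L i" if "x \<in> W" for x
    using that disjoint by blast
  define f where "f = restrict (\<lambda>x. THE i. i \<in> K \<and> x \<in> L i) W"
  have f: "f x \<in> K \<and> x \<in> L (f x)" if "x \<in> W" for x
    using theI'[OF unique[OF that]] that by (simp add: f_def)
  have classes: "color_class W f i = L i" if "i \<in> K" for i
    using f unique that cover by (auto simp: color_class_def)
  have "f \<in> colorings W E k"
  proof -
    have "f \<in> W \<rightarrow>\<^sub>E {1..k}" using f by (auto simp: f_def K_def)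
    moreover have "f u \<noteq> f v" if "u \<in> W" "v \<in> W" "adj E u v" for u v
      using f[OF that(1)] f[OF that(2)] stable that(3) by (auto simp: stables_def stable_def)
    ultimately show ?thesis by (simp add: colorings_def)
  qed
  moreover have "coloring_monomial W k f = N"
    unfolding coloring_monomial_def K_def[symmetric] NL using classes
    by (intro image_mset_cong) (simp add: K_def)
  ultimately show thesis by (rule that)
qed

lemma coloring_monomial_image:
  assumes "W \<subseteq> V"
  shows "coloring_monomial W k ` colorings W E k
    = {N \<in> monomials_deg (stables V E) k. \<not> overlapping N \<and> \<Union>(set_mset N) = W}"
proof (intro subset_antisym subsetI)
  fix N assume "N \<in> coloring_monomial W k ` colorings W E k"
  then obtain f where "f \<in> colorings W E k" "N = coloring_monomial W k f" by blast
  with assms show "N \<in> {N \<in> monomials_deg (stables V E) k. \<not> overlapping N \<and> \<Union>(set_mset N) = W}"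
    by (simp add: coloring_monomial_in_monomials_deg not_overlapping_coloring_monomial
        Union_coloring_monomial)
next
  fix N assume "N \<in> {N \<in> monomials_deg (stables V E) k. \<not> overlapping N \<and> \<Union>(set_mset N) = W}"
  then obtain f where "f \<in> colorings W E k" "coloring_monomial W k f = N"
    using coloring_monomial_surj by blast
  then show "N \<in> coloring_monomial W k ` colorings W E k" by blast
qed

section \<open>Kempe changes and binomial moves\<close>

lemma kempe_equiv_refl: "f \<in> colorings W E k \<Longrightarrow> (f, f) \<in> kempe_equiv W E k"
  unfolding kempe_equiv_def by auto

lemma kempe_equiv_trans:
  "(f, g) \<in> kempe_equiv W E k \<Longrightarrow> (g, h) \<in> kempe_equiv W E k \<Longrightarrow> (f, h) \<in> kempe_equiv W E k"
  unfolding kempe_equiv_def by (auto intro: rtrancl_trans)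

lemma kempe_switch_in_colorings:
  assumes f: "f \<in> colorings W E k" and C: "kempe_component W E f i j C"
    and ij: "i \<in> {1..k}" "j \<in> {1..k}"
  shows "kempe_switch f i j C \<in> colorings W E k"
proof -
  define R where "R = {(x, y). x \<in> W \<and> y \<in> W \<and> f x \<in> {i, j} \<and> f y \<in> {i, j} \<and> adj E x y}"
  obtain v where C_eq: "C = {w \<in> W. f w \<in> {i, j} \<and> (v, w) \<in> R\<^sup>*}"
    using C unfolding kempe_component_def R_def by blast
  have closed: "w \<in> C" if "u \<in> C" "w \<in> W" "f w \<in> {i, j}" "adj E u w" for u w
  proof -
    have "(v, u) \<in> R\<^sup>*" "(u, w) \<in> R" using that by (auto simp: C_eq R_def)
    then show ?thesis using that by (auto simp: C_eq)
  qed
  have "C \<subseteq> W" by (auto simp: C_eq)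
  then have "kempe_switch f i j C \<in> W \<rightarrow>\<^sub>E {1..k}"
    using f ij unfolding colorings_def PiE_iff extensional_def by (auto simp: kempe_switch_def)
  moreover have "kempe_switch f i j C u \<noteq> kempe_switch f i j C w"
    if "u \<in> W" "w \<in> W" "adj E u w" for u w
  proof -
    have "f u \<noteq> f w" using f that by (auto simp: colorings_def)
    moreover have "u \<in> C \<Longrightarrow> f w \<in> {i, j} \<Longrightarrow> w \<in> C" "w \<in> C \<Longrightarrow> f u \<in> {i, j} \<Longrightarrow> u \<in> C"
      using closed that adj_sym by metis+
    moreover have "\<forall>w\<in>C. f w \<in> {i, j}" by (auto simp: C_eq)
    ultimately show ?thesis by (auto simp: kempe_switch_def split: if_splits)
  qed
  ultimately show ?thesis by (simp add: colorings_def)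
qed

lemma permute_colors_in_colorings:
  assumes f: "f \<in> colorings W E k" and \<sigma>: "bij_betw \<sigma> {1..k} {1..k}"
  shows "restrict (\<sigma> \<circ> f) W \<in> colorings W E k"
proof -
  have range: "f u \<in> {1..k}" if "u \<in> W" for u
    using f that by (auto simp: colorings_def)
  have "\<sigma> (f u) \<noteq> \<sigma> (f w)" if "u \<in> W" "w \<in> W" "adj E u w" for u w
  proof -
    have "f u \<noteq> f w" using f that by (auto simp: colorings_def)
    then show ?thesis
      using range that inj_on_eq_iff[OF bij_betw_imp_inj_on[OF \<sigma>]] by blast
  qed
  then show ?thesis
    using range bij_betwE[OF \<sigma>] by (auto simp: colorings_def PiE_iff)
qed

lemma kempe_step_colorings:
  assumes "(f, g) \<in> kempe_step W E k"
  shows "f \<in> colorings W E k" "g \<in> colorings W E k"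
  using assms kempe_switch_in_colorings permute_colors_in_colorings
  by (auto simp: kempe_step_def)

lemma kempe_step_imp_kempe_equiv: "(f, g) \<in> kempe_step W E k \<Longrightarrow> (f, g) \<in> kempe_equiv W E k"
  using kempe_step_colorings by (auto simp: kempe_equiv_def)

lemma binomial_move_if_two_classes_change:
  assumes f: "f \<in> colorings W E k" and g: "g \<in> colorings W E k" and W: "W \<subseteq> V"
    and ij: "i \<in> {1..k}" "j \<in> {1..k}" "i \<noteq> j"
    and other: "\<And>l. l \<notin> {i, j} \<Longrightarrow> color_class W g l = color_class W f l"
    and union: "color_class W f i \<union> color_class W f j = color_class W g i \<union> color_class W g j"
  shows "(coloring_monomial W k f, coloring_monomial W k g) \<in> binomial_move (stables V E) k"
proof -
  define m where "m = image_mset (color_class W f) (mset_set ({1..k} - {i, j}))"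
  have mf: "coloring_monomial W k f = m + {#color_class W f i, color_class W f j#}"
    unfolding coloring_monomial_def m_def using ij by (intro image_mset_mset_set_remove2) auto
  have "coloring_monomial W k g
      = image_mset (color_class W g) (mset_set ({1..k} - {i, j})) + {#color_class W g i, color_class W g j#}"
    unfolding coloring_monomial_def using ij by (intro image_mset_mset_set_remove2) auto
  also have "image_mset (color_class W g) (mset_set ({1..k} - {i, j})) = m"
    unfolding m_def using other by (intro image_mset_cong) auto
  finally have mg: "coloring_monomial W k g = m + {#color_class W g i, color_class W g j#}" .
  have "card ({1..k} - {i, j}) = k - 2"
    using ij by (subst card_Diff_subset) auto
  then have "m \<in> monomials_deg (stables V E) (k - 2)"
    using color_class_stable[OF f W] by (auto simp: m_def monomials_deg_def)
  moreover have "2 \<le> k" using ij by auto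
  moreover have "color_class W f i \<inter> color_class W f j = {}" "color_class W g i \<inter> color_class W g j = {}"
    using ij by (auto simp: color_class_def)
  ultimately show ?thesis
    unfolding mf mg binomial_move_def
    using color_class_stable[OF f W] color_class_stable[OF g W] union by blast
qed

lemma coloring_monomial_permute_colors:
  assumes f: "f \<in> W \<rightarrow>\<^sub>E {1..k}" and \<sigma>: "bij_betw \<sigma> {1..k} {1..k}"
  shows "coloring_monomial W k (restrict (\<sigma> \<circ> f) W) = coloring_monomial W k f"
proof -
  have "f x \<in> {1..k}" if "x \<in> W" for x using f that by (rule PiE_mem)
  then have "color_class W (restrict (\<sigma> \<circ> f) W) (\<sigma> i) = color_class W f i" if "i \<in> {1..k}" for i
    using that inj_on_eq_iff[OF bij_betw_imp_inj_on[OF \<sigma>]] by (auto simp: color_class_def)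
  then have "image_mset (color_class W (restrict (\<sigma> \<circ> f) W)) (image_mset \<sigma> (mset_set {1..k}))
      = image_mset (color_class W f) (mset_set {1..k})"
    unfolding multiset.map_comp by (intro image_mset_cong) auto
  moreover have "image_mset \<sigma> (mset_set {1..k}) = mset_set {1..k}"
    using image_mset_mset_set[OF bij_betw_imp_inj_on[OF \<sigma>]] bij_betw_imp_surj_on[OF \<sigma>] by simp
  ultimately show ?thesis
    unfolding coloring_monomial_def by simp
qed

lemma kempe_step_binomial_moves:
  assumes step: "(f, g) \<in> kempe_step W E k" and W: "W \<subseteq> V"
  shows "(coloring_monomial W k f, coloring_monomial W k g) \<in> (binomial_move (stables V E) k)\<^sup>*"
proof -
  have f: "f \<in> colorings W E k" and g: "g \<in> colorings W E k"
    using kempe_step_colorings[OF step] by auto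
  from step consider (switch) i j C where "1 \<le> i" "i < j" "j \<le> k" "g = kempe_switch f i j C"
    | (permute) \<sigma> where "bij_betw \<sigma> {1..k} {1..k}" "g = restrict (\<sigma> \<circ> f) W"
    by (auto simp: kempe_step_def)
  then show ?thesis
  proof cases
    case switch
    have "g x \<in> {i, j} \<longleftrightarrow> f x \<in> {i, j}" for x
      using switch(4) by (auto simp: kempe_switch_def)
    then have "color_class W f i \<union> color_class W f j = color_class W g i \<union> color_class W g j"
      by (auto simp: color_class_def)
    moreover have "color_class W g l = color_class W f l" if "l \<notin> {i, j}" for l
      using switch(4) that by (auto simp: color_class_def kempe_switch_def)
    ultimately have "(coloring_monomial W k f, coloring_monomial W k g) \<in> binomial_move (stables V E) k"
      using binomial_move_if_two_classes_change[OF f g W, of i j] switch(1-3) by simp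
    then show ?thesis ..
  next
    case permute
    then show ?thesis
      using f coloring_monomial_permute_colors by (simp add: colorings_def)
  qed
qed

lemma kempe_equiv_binomial_moves:
  assumes "(f, g) \<in> kempe_equiv W E k" and W: "W \<subseteq> V"
  shows "(coloring_monomial W k f, coloring_monomial W k g) \<in> (binomial_move (stables V E) k)\<^sup>*"
proof -
  have "(f, g) \<in> (kempe_step W E k \<union> (kempe_step W E k)\<inverse>)\<^sup>*"
    using assms(1) by (simp add: kempe_equiv_def)
  then show ?thesis
  proof (induction rule: rtrancl_induct)
    case (step y z)
    then have "(coloring_monomial W k y, coloring_monomial W k z) \<in> (binomial_move (stables V E) k)\<^sup>*"
      using kempe_step_binomial_moves[OF _ W] binomial_moves_sym by blast
    with step.IH show ?case by (rule rtrancl_trans)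
  qed simp
qed

(* f and h, both proper on the subgraph coloured i or j, differ on the whole Kempe component of x0,
   so switching that component makes f agree with h there. *)
lemma kempe_switch_towards:
  assumes f: "f \<in> colorings W E k" and h: "h \<in> colorings W E k"
    and ij: "i \<in> {1..k}" "j \<in> {1..k}" "i \<noteq> j"
    and inside: "\<forall>x\<in>W. f x \<in> {i, j} \<longrightarrow> h x \<in> {i, j}"
    and x0: "x0 \<in> W" "f x0 \<in> {i, j}" "f x0 \<noteq> h x0"
  obtains g where "(f, g) \<in> kempe_step W E k" "\<forall>x\<in>W. g x \<in> {i, j} \<longleftrightarrow> f x \<in> {i, j}"
    "\<forall>x\<in>W. f x \<notin> {i, j} \<longrightarrow> g x = f x" "{x \<in> W. g x \<noteq> h x} \<subset> {x \<in> W. f x \<noteq> h x}"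
proof -
  define R where "R = {(x, y). x \<in> W \<and> y \<in> W \<and> f x \<in> {i, j} \<and> f y \<in> {i, j} \<and> adj E x y}"
  define C where "C = {w \<in> W. f w \<in> {i, j} \<and> (x0, w) \<in> R\<^sup>*}"
  have ij': "{min i j, max i j} = {i, j}" "1 \<le> min i j" "min i j < max i j" "max i j \<le> k"
    using ij by (auto simp: min_def max_def)
  define g where "g = kempe_switch f (min i j) (max i j) C"
  have "kempe_component W E f (min i j) (max i j) C"
    unfolding kempe_component_def ij'(1) C_def R_def using x0 by blast
  then have step: "(f, g) \<in> kempe_step W E k"
    unfolding kempe_step_def g_def using f ij'(2-4) by blast
  have disagree: "f w \<noteq> h w" if "(x0, w) \<in> R\<^sup>*" for w
    using that
  proof (induction rule: rtrancl_induct)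
    case (step y z)
    then have "y \<in> W" "z \<in> W" "f y \<in> {i, j}" "f z \<in> {i, j}" "adj E y z" by (auto simp: R_def)
    moreover from this have "f y \<noteq> f z" "h y \<noteq> h z" using f h by (auto simp: colorings_def)
    ultimately show ?case using inside step.IH by auto
  qed (use x0 in simp)
  have on_C: "g w = h w" if "w \<in> C" for w
  proof -
    have "f w \<in> {min i j, max i j}" "h w \<in> {min i j, max i j}" "f w \<noteq> h w"
      using that disagree inside unfolding ij'(1) by (auto simp: C_def)
    then show ?thesis using that ij'(3) by (auto simp: g_def kempe_switch_def)
  qed
  have off_C: "g w = f w" if "w \<notin> C" for w
    using that by (simp add: g_def kempe_switch_def)
  have "g x \<noteq> h x \<longleftrightarrow> f x \<noteq> h x \<and> x \<notin> C" for x
    using on_C off_C disagree by (cases "x \<in> C") (auto simp: C_def)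
  then have "{x \<in> W. g x \<noteq> h x} = {x \<in> W. f x \<noteq> h x} - C" by auto
  moreover have "x0 \<in> C" using x0 by (simp add: C_def)
  moreover have "g x \<in> {i, j} \<longleftrightarrow> f x \<in> {i, j}" for x
    using ij'(1) by (auto simp: g_def kempe_switch_def)
  moreover have "f x \<notin> {i, j} \<Longrightarrow> g x = f x" for x
    by (auto simp: g_def kempe_switch_def C_def)
  ultimately show thesis using that step x0 by blast
qed

lemma kempe_equiv_if_differ_on_two_colors:
  assumes "f \<in> colorings W E k" and h: "h \<in> colorings W E k" and "finite W"
    and ij: "i \<in> {1..k}" "j \<in> {1..k}" "i \<noteq> j"
    and "\<forall>x\<in>W. f x \<notin> {i, j} \<longrightarrow> h x = f x" and "\<forall>x\<in>W. f x \<in> {i, j} \<longrightarrow> h x \<in> {i, j}"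
  shows "(f, h) \<in> kempe_equiv W E k"
  using assms(1,7,8)
proof (induction "card {x \<in> W. f x \<noteq> h x}" arbitrary: f rule: less_induct)
  case less
  show ?case
  proof (cases "\<exists>x0\<in>W. f x0 \<noteq> h x0")
    case False
    then have "f = h" using less.prems(1) h by (intro PiE_ext) (auto simp: colorings_def)
    then show ?thesis using kempe_equiv_refl less.prems(1) by simp
  next
    case True
    then obtain x0 where x0: "x0 \<in> W" "f x0 \<noteq> h x0" by blast
    then have "f x0 \<in> {i, j}" using less.prems(2) by auto
    then obtain g where g: "(f, g) \<in> kempe_step W E k" "\<forall>x\<in>W. g x \<in> {i, j} \<longleftrightarrow> f x \<in> {i, j}"
      "\<forall>x\<in>W. f x \<notin> {i, j} \<longrightarrow> g x = f x" "{x \<in> W. g x \<noteq> h x} \<subset> {x \<in> W. f x \<noteq> h x}"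
      using kempe_switch_towards[OF less.prems(1) h ij less.prems(3) x0(1) _ x0(2)] by blast
    have "card {x \<in> W. g x \<noteq> h x} < card {x \<in> W. f x \<noteq> h x}"
      using g(4) \<open>finite W\<close> by (simp add: psubset_card_mono)
    moreover have "g \<in> colorings W E k" using kempe_step_colorings(2)[OF g(1)] .
    ultimately have "(g, h) \<in> kempe_equiv W E k"
      using less.hyps g(2,3) less.prems(2,3) by force
    then show ?thesis using kempe_step_imp_kempe_equiv[OF g(1)] kempe_equiv_trans by blast
  qed
qed

lemma kempe_equiv_if_same_monomial:
  assumes f: "f \<in> colorings W E k" and g: "g \<in> colorings W E k"
    and eq: "coloring_monomial W k f = coloring_monomial W k g"
  shows "(f, g) \<in> kempe_equiv W E k"
proof -
  from eq have
    "image_mset (color_class W f) (mset_set {1..k}) = image_mset (color_class W g) (mset_set {1..k})"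
    by (simp only: coloring_monomial_def)
  then obtain \<sigma> where \<sigma>: "\<sigma> permutes {1..k}"
    and classes: "\<forall>i\<in>{1..k}. color_class W f i = color_class W g (\<sigma> i)"
    by (rule image_mset_eq_implies_permutes[OF finite_atLeastAtMost])
  have "g = restrict (\<sigma> \<circ> f) W"
  proof (rule PiE_ext)
    show "g \<in> W \<rightarrow>\<^sub>E {1..k}" "restrict (\<sigma> \<circ> f) W \<in> W \<rightarrow>\<^sub>E {1..k}"
      using f g permutes_in_image[OF \<sigma>] by (auto simp: colorings_def)
  next
    fix x assume x: "x \<in> W"
    then have "f x \<in> {1..k}" "x \<in> color_class W f (f x)" using f by (auto simp: colorings_def color_class_def)
    then show "g x = restrict (\<sigma> \<circ> f) W x" using x classes by (auto simp: color_class_def)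
  qed
  then have "(f, g) \<in> kempe_step W E k"
    using f permutes_imp_bij[OF \<sigma>] unfolding kempe_step_def by blast
  then show ?thesis by (rule kempe_step_imp_kempe_equiv)
qed

lemma recolor_two_classes:
  assumes f: "f \<in> colorings W E k" and ij: "i \<in> {1..k}" "j \<in> {1..k}" "i \<noteq> j"
    and ST: "S \<in> stables V E" "T \<in> stables V E" "S \<inter> T = {}"
    and union: "S \<union> T = color_class W f i \<union> color_class W f j"
  defines "h \<equiv> restrict (\<lambda>x. if x \<in> S then i else if x \<in> T then j else f x) W"
  shows "h \<in> colorings W E k" and "color_class W h i = S" and "color_class W h j = T"
    and "\<And>l. l \<notin> {i, j} \<Longrightarrow> color_class W h l = color_class W f l"
proof -
  have ST_W: "S \<subseteq> W" "T \<subseteq> W" and outside: "\<And>x. x \<in> W \<Longrightarrow> x \<notin> S \<union> T \<longleftrightarrow> f x \<notin> {i, j}"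
    using union by (auto simp: color_class_def)
  have "h \<in> W \<rightarrow>\<^sub>E {1..k}" using f ij by (auto simp: h_def colorings_def PiE_iff)
  moreover have "h u \<noteq> h v" if "u \<in> W" "v \<in> W" "adj E u v" for u v
  proof -
    have "\<not> (u \<in> S \<and> v \<in> S)" "\<not> (u \<in> T \<and> v \<in> T)" "f u \<noteq> f v"
      using ST f that by (auto simp: stables_def stable_def colorings_def)
    then show ?thesis using that outside[of u] outside[of v] ST(3) ij(3) by (auto simp: h_def)
  qed
  ultimately show "h \<in> colorings W E k" by (simp add: colorings_def)
  show "color_class W h i = S" "color_class W h j = T"
    using ST_W ST(3) ij(3) outside by (auto simp: color_class_def h_def)
  show "color_class W h l = color_class W f l" if "l \<notin> {i, j}" for l
    using that outside by (auto simp: color_class_def h_def)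
qed

lemma kempe_equiv_realizes_binomial_move:
  assumes f: "f \<in> colorings W E k" and W: "W \<subseteq> V" "finite W"
    and move: "(coloring_monomial W k f, N) \<in> binomial_move (stables V E) k"
  obtains h where "(f, h) \<in> kempe_equiv W E k" "coloring_monomial W k h = N"
proof -
  obtain m S1 S2 S3 S4 where S: "S3 \<in> stables V E" "S4 \<in> stables V E" "S3 \<inter> S4 = {}"
    and S_union: "S1 \<union> S2 = S3 \<union> S4"
    and mf: "image_mset (color_class W f) (mset_set {1..k}) = m + {#S1, S2#}" and N: "N = m + {#S3, S4#}"
    using move unfolding binomial_move_def coloring_monomial_def by blast
  obtain i j where ij: "i \<in> {1..k}" "j \<in> {1..k}" "i \<noteq> j"
    and f_ij: "color_class W f i = S1" "color_class W f j = S2"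
    and m: "m = image_mset (color_class W f) (mset_set ({1..k} - {i, j}))"
    using mf by (rule image_mset_mset_set_eq_add2E[OF finite_atLeastAtMost])
  define h where "h = restrict (\<lambda>x. if x \<in> S3 then i else if x \<in> S4 then j else f x) W"
  have "S3 \<union> S4 = color_class W f i \<union> color_class W f j" using S_union f_ij by simp
  note h = recolor_two_classes[OF f ij S this, folded h_def]
  have "(f, h) \<in> kempe_equiv W E k"
  proof (rule kempe_equiv_if_differ_on_two_colors[OF f h(1) W(2) ij])
    show "\<forall>x\<in>W. f x \<notin> {i, j} \<longrightarrow> h x = f x"
      using h(4) by (auto simp: color_class_def)
    show "\<forall>x\<in>W. f x \<in> {i, j} \<longrightarrow> h x \<in> {i, j}"
      using h(2,3) f_ij S_union by (auto simp: color_class_def)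
  qed
  moreover have "coloring_monomial W k h = N"
  proof -
    have "coloring_monomial W k h
        = image_mset (color_class W h) (mset_set ({1..k} - {i, j})) + {#color_class W h i, color_class W h j#}"
      unfolding coloring_monomial_def using ij by (intro image_mset_mset_set_remove2) auto
    also have "image_mset (color_class W h) (mset_set ({1..k} - {i, j})) = m"
      unfolding m using h(4) by (intro image_mset_cong) auto
    finally show ?thesis using h(2,3) N by simp
  qed
  ultimately show thesis by (rule that)
qed

lemma kempe_equiv_iff_binomial_moves:
  assumes f: "f \<in> colorings W E k" and g: "g \<in> colorings W E k" and W: "W \<subseteq> V" "finite W"
  shows "(f, g) \<in> kempe_equiv W E k
    \<longleftrightarrow> (coloring_monomial W k f, coloring_monomial W k g) \<in> (binomial_move (stables V E) k)\<^sup>*"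
proof
  assume "(coloring_monomial W k f, coloring_monomial W k g) \<in> (binomial_move (stables V E) k)\<^sup>*"
  moreover have "\<exists>h. (f, h) \<in> kempe_equiv W E k \<and> coloring_monomial W k h = N"
    if "(coloring_monomial W k f, N) \<in> (binomial_move (stables V E) k)\<^sup>*" for N
    using that
  proof (induction rule: rtrancl_induct)
    case base
    then show ?case using f kempe_equiv_refl by blast
  next
    case (step N N')
    then obtain h where h: "(f, h) \<in> kempe_equiv W E k" "coloring_monomial W k h = N" by blast
    then have "h \<in> colorings W E k" by (simp add: kempe_equiv_def)
    then obtain h' where "(h, h') \<in> kempe_equiv W E k" "coloring_monomial W k h' = N'"
      using kempe_equiv_realizes_binomial_move[OF _ W] step(2) h(2) by blast
    then show ?case using h kempe_equiv_trans by blast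
  qed
  ultimately obtain h where "(f, h) \<in> kempe_equiv W E k" "coloring_monomial W k h = coloring_monomial W k g"
    by blast
  moreover from this have "h \<in> colorings W E k" by (simp add: kempe_equiv_def)
  ultimately show "(f, g) \<in> kempe_equiv W E k"
    using kempe_equiv_if_same_monomial g kempe_equiv_trans by blast
qed (rule kempe_equiv_binomial_moves[OF _ W(1)])

section \<open>Counting the classes\<close>

lemma card_quotient_eq_card_image:
  assumes "R \<subseteq> A \<times> A" and "\<And>x y. x \<in> A \<Longrightarrow> y \<in> A \<Longrightarrow> (x, y) \<in> R \<longleftrightarrow> h x = h y"
  shows "card (A // R) = card (h ` A)"
proof -
  define fiber where "fiber c = {y \<in> A. h y = c}" for c
  have "R `` {x} = fiber (h x)" if "x \<in> A" for x using assms that by (auto simp: fiber_def)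
  then have "A // R = fiber ` h ` A" unfolding quotient_def by auto
  moreover have "inj_on fiber (h ` A)" by (auto simp: inj_on_def fiber_def)
  ultimately show ?thesis by (simp add: card_image)
qed

lemma Kc_eq_card_move_classes:
  assumes "finite V" and W: "W \<subseteq> V"
  shows "Kc W E k = card (move_rep (stables V E) k `
    {N \<in> monomials_deg (stables V E) k. \<not> overlapping N \<and> \<Union>(set_mset N) = W})"
proof -
  let ?r = "move_rep (stables V E) k"
  have "finite W" using assms finite_subset by blast
  then have "Kc W E k = card ((?r \<circ> coloring_monomial W k) ` colorings W E k)"
    unfolding Kc_def
    by (intro card_quotient_eq_card_image)
      (auto simp: kempe_equiv_def move_rep_eq_iff kempe_equiv_iff_binomial_moves[OF _ _ W, symmetric])
  also have "(?r \<circ> coloring_monomial W k) ` colorings W E k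
      = ?r ` {N \<in> monomials_deg (stables V E) k. \<not> overlapping N \<and> \<Union>(set_mset N) = W}"
    by (simp only: image_comp[symmetric] coloring_monomial_image[OF W])
  finally show ?thesis .
qed

(* Moves preserve the vertex set covered by a monomial, so the classes split according to it. *)
lemma hilbK_eq_sum_Kc:
  assumes V: "finite V"
  shows "hilbK TYPE('a::field) V E k = (\<Sum>W\<in>Pow V. Kc W E k)"
proof -
  let ?X = "stables V E" and ?r = "move_rep (stables V E) k"
  define good where "good W = {N \<in> monomials_deg ?X k. \<not> overlapping N \<and> \<Union>(set_mset N) = W}" for W
  have "{N \<in> monomials_deg ?X k. \<not> overlapping N} = (\<Union>W\<in>Pow V. good W)"
    by (auto simp: good_def monomials_deg_def stables_def stable_def)
  then have "hilbK TYPE('a) V E k = card (\<Union>W\<in>Pow V. ?r ` good W)"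
    by (simp add: hilbK_eq_card_move_classes[OF V] image_UN)
  also have "\<dots> = (\<Sum>W\<in>Pow V. card (?r ` good W))"
  proof (intro card_UN_disjoint ballI impI)
    show "finite (?r ` good W)" for W
      using finite_monomials_deg[OF finite_stables[OF V]] by (auto simp: good_def)
    have covered: "\<Union>(set_mset (?r N)) = W" if "N \<in> good W" for N W
    proof -
      have "\<Union>(set_mset (?r N)) = \<Union>(set_mset N)"
        using binomial_moves_invariants(2)[OF moves_to_move_rep] by (rule sym)
      also have "\<dots> = W" using that by (simp add: good_def)
      finally show ?thesis .
    qed
    show "?r ` good W \<inter> ?r ` good W' = {}" if "W \<noteq> W'" for W W'
    proof (rule ccontr)
      assume "?r ` good W \<inter> ?r ` good W' \<noteq> {}"
      then obtain N N' where "N \<in> good W" "N' \<in> good W'" "?r N = ?r N'" by blast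
      then show False using covered[of N W] covered[of N' W'] that by simp
    qed
  qed (use V in simp)
  also have "\<dots> = (\<Sum>W\<in>Pow V. Kc W E k)"
    using Kc_eq_card_move_classes[OF V] by (simp add: good_def)
  finally show ?thesis .
qed

lemma Kc_induced_edges:
  assumes "W \<subseteq> U"
  shows "Kc W (induced_edges E U) k = Kc W E k"
proof -
  have adj: "\<forall>u\<in>W. \<forall>v\<in>W. adj (induced_edges E U) u v = adj E u v"
    using assms by (auto simp: adj_def induced_edges_def)
  then have colorings: "colorings W (induced_edges E U) k = colorings W E k"
    unfolding colorings_def by blast
  have two_colored: "{(x, y). x \<in> W \<and> y \<in> W \<and> f x \<in> {i, j} \<and> f y \<in> {i, j} \<and> adj (induced_edges E U) x y}
      = {(x, y). x \<in> W \<and> y \<in> W \<and> f x \<in> {i, j} \<and> f y \<in> {i, j} \<and> adj E x y}" for f i j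
    using adj by blast
  have "kempe_component W (induced_edges E U) = kempe_component W E"
    unfolding kempe_component_def two_colored ..
  then show ?thesis
    unfolding Kc_def kempe_equiv_def kempe_step_def colorings by (simp only:)
qed

lemma induced_edges_induced_edges:
  "U \<subseteq> T \<Longrightarrow> induced_edges (induced_edges E T) U = induced_edges E U"
  by (auto simp: induced_edges_def)

lemma hilbK_eq_sum_Kc_induced:
  assumes "finite V"
  shows "hilbK TYPE('a::field) V E k = (\<Sum>W\<in>Pow V. Kc W (induced_edges E W) k)"
  unfolding hilbK_eq_sum_Kc[OF assms] by (intro sum.cong) (simp_all add: Kc_induced_edges)

lemma mobius_inversion_by_card:
  fixes f g :: "'a set \<Rightarrow> 'b::comm_ring_1"
  assumes "finite V" and g: "\<And>T. T \<subseteq> V \<Longrightarrow> g T = sum f (Pow T)"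
  shows "f V = (\<Sum>m = 0..card V. (-1) ^ (card V - m) * (\<Sum>T\<in>{T. T \<subseteq> V \<and> card T = m}. g T))"
proof -
  have "f V = (\<Sum>T\<in>Pow V. (-1) ^ (card V - card T) * sum f (Pow T))"
    by (rule inclusion_exclusion_mobius) (use assms in simp_all)
  also have "\<dots> = (\<Sum>m = 0..card V. \<Sum>T\<in>{T \<in> Pow V. card T = m}. (-1) ^ (card V - card T) * sum f (Pow T))"
    using assms(1) by (intro sum.group[symmetric]) (auto intro: card_mono)
  also have "\<dots> = (\<Sum>m = 0..card V. (-1) ^ (card V - m) * (\<Sum>T\<in>{T. T \<subseteq> V \<and> card T = m}. g T))"
    by (intro sum.cong refl) (auto simp: sum_distrib_left g)
  finally show ?thesis .
qed

theorem corollary6p9: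
  fixes d :: nat and E :: "nat set set" and k :: nat
  assumes "simple_graph_on {1..d} E"
  shows "hilbK TYPE('a::field) {1..d} E k
           = (\<Sum>W\<in>Pow {1..d}. Kc W (induced_edges E W) k)
       \<and> int (Kc {1..d} E k)
           = (\<Sum>m = 0..d. (-1) ^ (d - m) *
                (\<Sum>W\<in>{W. W \<subseteq> {1..d} \<and> card W = m}.
                   int (hilbK TYPE('a::field) W (induced_edges E W) k)))"
proof
  show "hilbK TYPE('a) {1..d} E k = (\<Sum>W\<in>Pow {1..d}. Kc W (induced_edges E W) k)"
    by (rule hilbK_eq_sum_Kc_induced) simp
  have "int (hilbK TYPE('a) T (induced_edges E T) k) = (\<Sum>U\<in>Pow T. int (Kc U (induced_edges E U) k))"
    if "T \<subseteq> {1..d}" for T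
    using that finite_subset[OF that] by (simp add: hilbK_eq_sum_Kc_induced induced_edges_induced_edges)
  from mobius_inversion_by_card[of "{1..d}", OF _ this]
  show "int (Kc {1..d} E k) = (\<Sum>m = 0..d. (-1) ^ (d - m) *
      (\<Sum>W\<in>{W. W \<subseteq> {1..d} \<and> card W = m}. int (hilbK TYPE('a) W (induced_edges E W) k)))"
    by (simp add: Kc_induced_edges)
qed

end
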